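(* Let $X_N\subseteq\mathbb{R}^n\times\mathcal{N}$ be the feasibility domain of the terminal-set EMPC problem $\mathbb{P}_T$ below, and suppose there exist a control law $\kappa_f:\mathbb{R}^n\times\mathcal{N}\to\mathbb{R}^m$ and a family of sets $X^f=\{X^f_i\}_{i\in\mathcal{N}}$ that is uniformly positive invariant for the constrained system in closed loop with $\kappa_f$. Then $X_N$ is uniformly positive invariant for the MPC-controlled system $x_{k+1}=f(x_k,\hat\kappa_N(x_k,\theta_k),\theta_k)$, i.e., if $(x_k,\theta_k)\in X_N$ then $(x_{k+1},\theta_{k+1})\in X_N$ for every $\theta_{k+1}\in\mathcal{C}(\theta_k)$.
   Context: Setting: $\mathcal{N}=\{1,\dots,\nu\}$; $\{\theta_k\}$ a time-homogeneous, irreducible, aperiodic Markov chain on $\mathcal{N}$ with transition matrix $P=(p_{ij})$ on a filtered probability space $(\Omega,\mathfrak{F},\{\mathfrak{F}_k\},\mathbb{P})$, $\mathfrak{F}_k$ generated by the history up to time $k$; system $x_{k+1}=f(x_k,u_k,\theta_k)$, $x_k\in\mathbb{R}^n$, $u_k\in\mathbb{R}^m$, with $x_k,\theta_k$ measured at time $k$; constraints $(x_k,u_k)\in Y_{\theta_k}$ ($Y_\theta$ nonempty compact); stage cost $\ell$ with each $\ell(\cdot,\cdot,\theta)$ nonnegative, lower semicontinuous, level-bounded in $u$ locally uniformly in $x$; $f(\cdot,\cdot,\theta)$ continuous. $u\lhd\mathfrak{F}_k$ means $\mathfrak{F}_k$-measurable. Cover $\mathcal{C}(i)=\{j:p_{ij}>0\}$.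 Uniform positive invariance: a family of nonempty sets $C=\{C_i\}_{i\in\mathcal{N}}$ is UPI for a constrained closed-loop Markovian switching system if $x_k\in C_{\theta_k}$ implies $x_{k+1}\in C_{\theta_{k+1}}$ (for every possible successor mode), with the state-input constraints satisfied. Terminal-set problem $\mathbb{P}_T(x,\theta)$, with a terminal penalty $V_f:\mathbb{R}^n\times\mathcal{N}\to\mathbb{R}$: $V_N^\star(x,\theta)=\inf_{\mathbf{u}_N}\mathbb{E}[V_f(x_N,\theta_N)+\sum_{j=0}^{N-1}\ell(x_j,u_j,\theta_j)\mid\mathfrak{F}_0]$ subject to, for $k=0,\dots,N-1$: $x_{k+1}=f(x_k,u_k,\theta_k)$, $(x_k,u_k)\in Y_{\theta_k}$, $(x_0,\theta_0)=(x,\theta)$, $x_N\in X^f_{\theta_N}$, $u_k\lhd\mathfrak{F}_k$. $\hat\kappa_N(x,\theta)$ is the first element of an optimal policy. *)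

theory Defs
  imports "HOL-Analysis.Analysis"
begin

text \<open>Modes are the natural numbers 1..nu; the transition matrix is P :: nat => nat => real,
only its entries on {1..nu} x {1..nu} matter.\<close>

definition modes :: "nat \<Rightarrow> nat set" where
  "modes nu = {1..nu}"

definition stochastic_matrix :: "nat \<Rightarrow> (nat \<Rightarrow> nat \<Rightarrow> real) \<Rightarrow> bool" where
  "stochastic_matrix nu P \<longleftrightarrow>
     (\<forall>i\<in>modes nu. \<forall>j\<in>modes nu. 0 \<le> P i j) \<and>
     (\<forall>i\<in>modes nu. (\<Sum>j\<in>modes nu. P i j) = 1)"

fun mpow :: "nat \<Rightarrow> (nat \<Rightarrow> nat \<Rightarrow> real) \<Rightarrow> nat \<Rightarrow> nat \<Rightarrow> nat \<Rightarrow> real" where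
  "mpow nu P 0 i j = (if i = j then 1 else 0)"
| "mpow nu P (Suc k) i j = (\<Sum>l\<in>modes nu. mpow nu P k i l * P l j)"

definition irreducible_chain :: "nat \<Rightarrow> (nat \<Rightarrow> nat \<Rightarrow> real) \<Rightarrow> bool" where
  "irreducible_chain nu P \<longleftrightarrow>
     (\<forall>i\<in>modes nu. \<forall>j\<in>modes nu. \<exists>k>0. mpow nu P k i j > 0)"

definition aperiodic_chain :: "nat \<Rightarrow> (nat \<Rightarrow> nat \<Rightarrow> real) \<Rightarrow> bool" where
  "aperiodic_chain nu P \<longleftrightarrow>
     (\<forall>i\<in>modes nu. Gcd {k. k > 0 \<and> mpow nu P k i i > 0} = 1)"

definition cover :: "nat \<Rightarrow> (nat \<Rightarrow> nat \<Rightarrow> real) \<Rightarrow> nat \<Rightarrow> nat set" where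
  "cover nu P i = {j \<in> modes nu. P i j > 0}"

definition lsc :: "('a::topological_space \<Rightarrow> real) \<Rightarrow> bool" where
  "lsc g \<longleftrightarrow> (\<forall>z t. t < g z \<longrightarrow> (\<forall>\<^sub>F z' in nhds z. t < g z'))"

definition level_bounded_loc_unif ::
  "('x::topological_space \<Rightarrow> 'u::metric_space \<Rightarrow> real) \<Rightarrow> bool" where
  "level_bounded_loc_unif g \<longleftrightarrow>
     (\<forall>x (\<alpha>::real). \<exists>V. open V \<and> x \<in> V \<and> bounded (\<Union>x'\<in>V. {u. g x' u \<le> \<alpha>}))"

definition UPI ::
  "nat \<Rightarrow> (nat \<Rightarrow> nat \<Rightarrow> real) \<Rightarrow> ('x \<Rightarrow> 'u \<Rightarrow> nat \<Rightarrow> 'x) \<Rightarrow> (nat \<Rightarrow> ('x \<times> 'u) set)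
   \<Rightarrow> ('x \<Rightarrow> nat \<Rightarrow> 'u) \<Rightarrow> (nat \<Rightarrow> 'x set) \<Rightarrow> bool" where
  "UPI nu P f Y kappa C \<longleftrightarrow>
     (\<forall>i\<in>modes nu. C i \<noteq> {}) \<and>
     (\<forall>i\<in>modes nu. \<forall>x\<in>C i. (x, kappa x i) \<in> Y i \<and>
        (\<forall>j\<in>cover nu P i. f x (kappa x i) i \<in> C j))"

text \<open>Mode histories theta_0..theta_N are lists of length N+1. A causal policy
  (u_k measurable w.r.t. F_k) is a map mu from mode histories: u_k = mu [theta_0,...,theta_k].\<close>
fun traj :: "('x \<Rightarrow> 'u \<Rightarrow> nat \<Rightarrow> 'x) \<Rightarrow> 'x \<Rightarrow> (nat list \<Rightarrow> 'u) \<Rightarrow> nat list \<Rightarrow> nat \<Rightarrow> 'x" where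
  "traj f x mu ps 0 = x"
| "traj f x mu ps (Suc k) = f (traj f x mu ps k) (mu (take (Suc k) ps)) (ps ! k)"

definition paths :: "nat \<Rightarrow> nat \<Rightarrow> nat \<Rightarrow> nat list set" where
  "paths nu N \<theta> = {ps. length ps = Suc N \<and> set ps \<subseteq> modes nu \<and> ps ! 0 = \<theta>}"

definition path_prob :: "(nat \<Rightarrow> nat \<Rightarrow> real) \<Rightarrow> nat \<Rightarrow> nat list \<Rightarrow> real" where
  "path_prob P N ps = (\<Prod>k<N. P (ps ! k) (ps ! Suc k))"

text \<open>Feasibility of a policy for P_T(x,theta): constraints hold almost surely,
  i.e. along every mode history of positive probability.\<close>
definition feasible_policy ::
  "nat \<Rightarrow> (nat \<Rightarrow> nat \<Rightarrow> real) \<Rightarrow> ('x \<Rightarrow> 'u \<Rightarrow> nat \<Rightarrow> 'x) \<Rightarrow> (nat \<Rightarrow> ('x \<times> 'u) set)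
   \<Rightarrow> (nat \<Rightarrow> 'x set) \<Rightarrow> nat \<Rightarrow> 'x \<Rightarrow> nat \<Rightarrow> (nat list \<Rightarrow> 'u) \<Rightarrow> bool" where
  "feasible_policy nu P f Y Xf N x \<theta> mu \<longleftrightarrow>
     (\<forall>ps\<in>paths nu N \<theta>. path_prob P N ps > 0 \<longrightarrow>
        (\<forall>k<N. (traj f x mu ps k, mu (take (Suc k) ps)) \<in> Y (ps ! k)) \<and>
        traj f x mu ps N \<in> Xf (ps ! N))"

definition feas_domain ::
  "nat \<Rightarrow> (nat \<Rightarrow> nat \<Rightarrow> real) \<Rightarrow> ('x \<Rightarrow> 'u \<Rightarrow> nat \<Rightarrow> 'x) \<Rightarrow> (nat \<Rightarrow> ('x \<times> 'u) set)
   \<Rightarrow> (nat \<Rightarrow> 'x set) \<Rightarrow> nat \<Rightarrow> ('x \<times> nat) set" where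
  "feas_domain nu P f Y Xf N =
     {(x, \<theta>). \<theta> \<in> modes nu \<and> (\<exists>mu. feasible_policy nu P f Y Xf N x \<theta> mu)}"

definition exp_cost ::
  "nat \<Rightarrow> (nat \<Rightarrow> nat \<Rightarrow> real) \<Rightarrow> ('x \<Rightarrow> 'u \<Rightarrow> nat \<Rightarrow> 'x) \<Rightarrow> ('x \<Rightarrow> 'u \<Rightarrow> nat \<Rightarrow> real)
   \<Rightarrow> ('x \<Rightarrow> nat \<Rightarrow> real) \<Rightarrow> nat \<Rightarrow> 'x \<Rightarrow> nat \<Rightarrow> (nat list \<Rightarrow> 'u) \<Rightarrow> real" where
  "exp_cost nu P f ell Vf N x \<theta> mu =
     (\<Sum>ps\<in>paths nu N \<theta>. path_prob P N ps *
        (Vf (traj f x mu ps N) (ps ! N) +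
         (\<Sum>k<N. ell (traj f x mu ps k) (mu (take (Suc k) ps)) (ps ! k))))"

definition optimal_policy ::
  "nat \<Rightarrow> (nat \<Rightarrow> nat \<Rightarrow> real) \<Rightarrow> ('x \<Rightarrow> 'u \<Rightarrow> nat \<Rightarrow> 'x) \<Rightarrow> (nat \<Rightarrow> ('x \<times> 'u) set)
   \<Rightarrow> (nat \<Rightarrow> 'x set) \<Rightarrow> ('x \<Rightarrow> 'u \<Rightarrow> nat \<Rightarrow> real) \<Rightarrow> ('x \<Rightarrow> nat \<Rightarrow> real)
   \<Rightarrow> nat \<Rightarrow> 'x \<Rightarrow> nat \<Rightarrow> (nat list \<Rightarrow> 'u) \<Rightarrow> bool" where
  "optimal_policy nu P f Y Xf ell Vf N x \<theta> mu \<longleftrightarrow>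
     feasible_policy nu P f Y Xf N x \<theta> mu \<and>
     (\<forall>mu'. feasible_policy nu P f Y Xf N x \<theta> mu' \<longrightarrow>
        exp_cost nu P f ell Vf N x \<theta> mu \<le> exp_cost nu P f ell Vf N x \<theta> mu')"

end

theory Submission
  imports Defs
begin

text \<open>Recursive feasibility by the usual shifting argument. If \<open>\<mu>\<close> is feasible from
  \<open>(x, \<theta>)\<close>, then from the successor state \<open>f x (\<mu> [\<theta>]) \<theta>\<close> in any mode \<open>\<theta>'\<close> with
  \<open>P \<theta> \<theta>' > 0\<close>, the policy that replays \<open>\<mu>\<close> along the extended mode history and applies
  the terminal law \<open>\<kappa>f\<close> at the last stage is feasible: every positive-probability
  history from \<open>\<theta>'\<close>, prefixed by \<open>\<theta>\<close>, is a positive-probability history from \<open>\<theta>\<close>, so the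
  first \<open>N - 1\<close> stages inherit the constraints of \<open>\<mu>\<close>, and the last stage starts in the
  old terminal set, where uniform positive invariance of \<open>Xf\<close> under \<open>\<kappa>f\<close> supplies both the
  stage constraint and the new terminal condition. Since \<open>\<kappa>N x \<theta>\<close> is the first input of a
  feasible (optimal) policy, the feasibility domain is invariant.\<close>

lemma traj_take:
  assumes "k \<le> n"
  shows "traj f x \<mu> (take n ps) k = traj f x \<mu> ps k"
  using assms by (induction k) (auto simp: min_def)

lemma path_prob_take:
  assumes "N < n"
  shows "path_prob P N (take n ps) = path_prob P N ps"
  unfolding path_prob_def using assms by (intro prod.cong) auto

lemma path_prob_pos_iff:
  assumes P_nonneg: "\<forall>i\<in>modes nu. \<forall>j\<in>modes nu. 0 \<le> P i j"
    and ps_modes: "set ps \<subseteq> modes nu" and N: "N < length ps"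
  shows "0 < path_prob P N ps \<longleftrightarrow> (\<forall>k<N. 0 < P (ps ! k) (ps ! Suc k))"
proof
  assume "0 < path_prob P N ps"
  then have nonzero: "P (ps ! k) (ps ! Suc k) \<noteq> 0" if "k < N" for k
    using that unfolding path_prob_def
    by (metis finite_lessThan lessThan_iff order_less_irrefl prod_zero_iff)
  have "0 \<le> P (ps ! k) (ps ! Suc k)" if "k < N" for k
  proof -
    have "ps ! k \<in> modes nu" "ps ! Suc k \<in> modes nu"
      using that N ps_modes by (auto intro!: nth_mem[THEN subsetD[OF ps_modes]])
    then show ?thesis using P_nonneg by blast
  qed
  with nonzero show "\<forall>k<N. 0 < P (ps ! k) (ps ! Suc k)"
    by (simp add: order_less_le)
next
  assume "\<forall>k<N. 0 < P (ps ! k) (ps ! Suc k)"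
  then show "0 < path_prob P N ps"
    unfolding path_prob_def by (auto intro: prod_pos)
qed

text \<open>It is only ever applied to
  histories of length at most \<open>N\<close>, and \<open>qs ! (N - 1)\<close> is then the current mode.\<close>
definition extend_policy ::
  "('x \<Rightarrow> 'u \<Rightarrow> nat \<Rightarrow> 'x) \<Rightarrow> ('x \<Rightarrow> nat \<Rightarrow> 'u) \<Rightarrow> nat \<Rightarrow> 'x \<Rightarrow> nat
   \<Rightarrow> (nat list \<Rightarrow> 'u) \<Rightarrow> nat list \<Rightarrow> 'u" where
  "extend_policy f \<kappa> N x \<theta> \<mu> qs =
     (if length qs < N then \<mu> (\<theta> # qs) else \<kappa> (traj f x \<mu> (\<theta> # qs) N) (qs ! (N - 1)))"

lemma traj_extend_policy:
  assumes "k < N"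
  shows "traj f (f x (\<mu> [\<theta>]) \<theta>) (extend_policy f \<kappa> N x \<theta> \<mu>) ps k = traj f x \<mu> (\<theta> # ps) (Suc k)"
  using assms by (induction k) (auto simp: extend_policy_def)

lemma extend_policy_last:
  assumes "1 \<le> N" and "N \<le> length ps"
  shows "extend_policy f \<kappa> N x \<theta> \<mu> (take N ps) = \<kappa> (traj f x \<mu> (\<theta> # ps) N) (ps ! (N - 1))"
proof -
  have "traj f x \<mu> (\<theta> # take N ps) N = traj f x \<mu> (take (Suc N) (\<theta> # ps)) N" by simp
  also have "\<dots> = traj f x \<mu> (\<theta> # ps) N" by (rule traj_take) simp
  finally show ?thesis using assms by (simp add: extend_policy_def min_def)
qed

text \<open>\<open>take (Suc N) (\<theta> # ps)\<close> has positive probability from \<open>\<theta>\<close> because \<open>P \<theta> \<theta>' > 0\<close>.\<close>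
lemma feasible_policy_Cons_path:
  assumes P_nonneg: "\<forall>i\<in>modes nu. \<forall>j\<in>modes nu. 0 \<le> P i j"
    and \<theta>: "\<theta> \<in> modes nu" and \<theta>': "\<theta>' \<in> cover nu P \<theta>"
    and feasible: "feasible_policy nu P f Y Xf N x \<theta> \<mu>"
    and ps: "ps \<in> paths nu N \<theta>'" and ps_pos: "0 < path_prob P N ps"
  shows "\<forall>k<N. (traj f x \<mu> (\<theta> # ps) k, \<mu> (take (Suc k) (\<theta> # ps))) \<in> Y ((\<theta> # ps) ! k)"
    and "traj f x \<mu> (\<theta> # ps) N \<in> Xf ((\<theta> # ps) ! N)"
proof -
  let ?qs = "\<theta> # ps"
  have len: "length ps = Suc N" and ps_modes: "set ps \<subseteq> modes nu" and ps0: "ps ! 0 = \<theta>'"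
    using ps unfolding paths_def by auto
  have prefix: "take (Suc N) ?qs \<in> paths nu N \<theta>"
    using len ps_modes \<theta> unfolding paths_def by (auto dest: in_set_takeD)
  have "0 < path_prob P N (take (Suc N) ?qs)"
  proof -
    have "\<forall>k<N. 0 < P (ps ! k) (ps ! Suc k)"
      using path_prob_pos_iff[OF P_nonneg ps_modes] ps_pos len by simp
    then have "0 < P (?qs ! k) (?qs ! Suc k)" if "k < N" for k
      using that \<theta>' ps0 unfolding cover_def by (cases k) auto
    moreover have "set ?qs \<subseteq> modes nu" using \<theta> ps_modes by simp
    ultimately show ?thesis
      using path_prob_pos_iff[OF P_nonneg, of ?qs N] path_prob_take[of N "Suc N" P ?qs] len
      by simp
  qed
  with feasible prefix
  have "(\<forall>k<N. (traj f x \<mu> (take (Suc N) ?qs) k, \<mu> (take (Suc k) (take (Suc N) ?qs)))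
          \<in> Y (take (Suc N) ?qs ! k)) \<and>
        traj f x \<mu> (take (Suc N) ?qs) N \<in> Xf (take (Suc N) ?qs ! N)"
    unfolding feasible_policy_def by blast
  then show "\<forall>k<N. (traj f x \<mu> ?qs k, \<mu> (take (Suc k) ?qs)) \<in> Y (?qs ! k)"
    and "traj f x \<mu> ?qs N \<in> Xf (?qs ! N)"
    by (simp_all add: traj_take min_def del: take_Suc_Cons)
qed

lemma feasible_policy_extend_policy:
  assumes P_nonneg: "\<forall>i\<in>modes nu. \<forall>j\<in>modes nu. 0 \<le> P i j"
    and Xf_UPI: "UPI nu P f Y \<kappa> Xf"
    and N: "1 \<le> N"
    and \<theta>: "\<theta> \<in> modes nu" and \<theta>': "\<theta>' \<in> cover nu P \<theta>"
    and feasible: "feasible_policy nu P f Y Xf N x \<theta> \<mu>"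
  shows "feasible_policy nu P f Y Xf N (f x (\<mu> [\<theta>]) \<theta>) \<theta>' (extend_policy f \<kappa> N x \<theta> \<mu>)"
  unfolding feasible_policy_def
proof (intro ballI impI)
  fix ps assume ps: "ps \<in> paths nu N \<theta>'" and ps_pos: "0 < path_prob P N ps"
  let ?x' = "f x (\<mu> [\<theta>]) \<theta>" and ?\<mu>' = "extend_policy f \<kappa> N x \<theta> \<mu>" and ?qs = "\<theta> # ps"
  have len: "length ps = Suc N" and ps_modes: "set ps \<subseteq> modes nu"
    using ps unfolding paths_def by auto
  note old_Y = feasible_policy_Cons_path(1)[OF P_nonneg \<theta> \<theta>' feasible ps ps_pos]
  note old_Xf = feasible_policy_Cons_path(2)[OF P_nonneg \<theta> \<theta>' feasible ps ps_pos]
  define z where "z = traj f x \<mu> ?qs N"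
  define i where "i = ps ! (N - 1)"
  have i: "i \<in> modes nu" using ps_modes len N unfolding i_def by auto
  have z: "z \<in> Xf i" using old_Xf N unfolding z_def i_def by (cases N) auto
  have last_input: "?\<mu>' (take N ps) = \<kappa> z i"
    unfolding z_def i_def using extend_policy_last[of N ps] N len by simp
  have last_state: "traj f ?x' ?\<mu>' ps (N - 1) = z"
    using traj_extend_policy[of "N - 1" N] N unfolding z_def by simp
  show "(\<forall>k<N. (traj f ?x' ?\<mu>' ps k, ?\<mu>' (take (Suc k) ps)) \<in> Y (ps ! k)) \<and>
        traj f ?x' ?\<mu>' ps N \<in> Xf (ps ! N)"
  proof (intro conjI allI impI)
    fix k assume k: "k < N"
    show "(traj f ?x' ?\<mu>' ps k, ?\<mu>' (take (Suc k) ps)) \<in> Y (ps ! k)"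
    proof (cases "Suc k < N")
      case True
      then have "?\<mu>' (take (Suc k) ps) = \<mu> (take (Suc (Suc k)) ?qs)"
        using len by (simp add: extend_policy_def)
      moreover have "traj f ?x' ?\<mu>' ps k = traj f x \<mu> ?qs (Suc k)"
        by (rule traj_extend_policy[OF k])
      ultimately show ?thesis
        using old_Y True by (metis nth_Cons_Suc)
    next
      case False
      with k have "k = N - 1" by simp
      then show ?thesis
        using last_state last_input z i Xf_UPI N unfolding UPI_def i_def by auto
    qed
  next
    have "0 < P i (ps ! N)"
      using path_prob_pos_iff[OF P_nonneg ps_modes] ps_pos len N unfolding i_def
      by (metis Suc_pred' lessI less_Suc_eq_0_disj not_one_le_zero)
    then have "ps ! N \<in> cover nu P i"
      using ps_modes len unfolding cover_def by auto
    moreover have "traj f ?x' ?\<mu>' ps N = f z (\<kappa> z i) i"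
      using last_state last_input N unfolding i_def by (cases N) auto
    ultimately show "traj f ?x' ?\<mu>' ps N \<in> Xf (ps ! N)"
      using z i Xf_UPI unfolding UPI_def by auto
  qed
qed

theorem proposition2:
  fixes nu N :: nat
    and P :: "nat \<Rightarrow> nat \<Rightarrow> real"
    and f :: "real^'n \<Rightarrow> real^'m \<Rightarrow> nat \<Rightarrow> real^'n"
    and Y :: "nat \<Rightarrow> ((real^'n) \<times> (real^'m)) set"
    and ell :: "real^'n \<Rightarrow> real^'m \<Rightarrow> nat \<Rightarrow> real"
    and Vf :: "real^'n \<Rightarrow> nat \<Rightarrow> real"
    and Xf :: "nat \<Rightarrow> (real^'n) set"
    and \<kappa>f :: "real^'n \<Rightarrow> nat \<Rightarrow> real^'m"
    and \<kappa>N :: "real^'n \<Rightarrow> nat \<Rightarrow> real^'m"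
  assumes nu: "nu \<ge> 1"
    and horizon: "N \<ge> 1"
    and stoch: "stochastic_matrix nu P"
    and irred: "irreducible_chain nu P"
    and aper: "aperiodic_chain nu P"
    and Y_ne: "\<forall>i\<in>modes nu. Y i \<noteq> {}"
    and Y_compact: "\<forall>i\<in>modes nu. compact (Y i)"
    and f_cont: "\<forall>i\<in>modes nu. continuous_on UNIV (\<lambda>(x, u). f x u i)"
    and l_nonneg: "\<forall>i\<in>modes nu. \<forall>x u. 0 \<le> ell x u i"
    and l_lsc: "\<forall>i\<in>modes nu. lsc (\<lambda>(x, u). ell x u i)"
    and l_lb: "\<forall>i\<in>modes nu. level_bounded_loc_unif (\<lambda>x u. ell x u i)"
    and Xf_UPI: "UPI nu P f Y \<kappa>f Xf"
    and kappaN: "\<forall>(x, \<theta>)\<in>feas_domain nu P f Y Xf N.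
                   \<exists>mu. optimal_policy nu P f Y Xf ell Vf N x \<theta> mu \<and> \<kappa>N x \<theta> = mu [\<theta>]"
  shows "\<forall>(x, \<theta>)\<in>feas_domain nu P f Y Xf N. \<forall>\<theta>'\<in>cover nu P \<theta>.
           (f x (\<kappa>N x \<theta>) \<theta>, \<theta>') \<in> feas_domain nu P f Y Xf N"
proof (intro ballI, clarify)
  fix x \<theta> \<theta>'
  assume x\<theta>: "(x, \<theta>) \<in> feas_domain nu P f Y Xf N" and \<theta>': "\<theta>' \<in> cover nu P \<theta>"
  obtain \<mu> where "optimal_policy nu P f Y Xf ell Vf N x \<theta> \<mu>" and \<kappa>N_x\<theta>: "\<kappa>N x \<theta> = \<mu> [\<theta>]"
    using kappaN x\<theta> by blast
  then have "feasible_policy nu P f Y Xf N x \<theta> \<mu>"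
    unfolding optimal_policy_def by blast
  moreover have "\<theta> \<in> modes nu" using x\<theta> unfolding feas_domain_def by blast
  moreover have "\<forall>i\<in>modes nu. \<forall>j\<in>modes nu. 0 \<le> P i j"
    using stoch unfolding stochastic_matrix_def by blast
  ultimately have "feasible_policy nu P f Y Xf N (f x (\<kappa>N x \<theta>) \<theta>) \<theta>' (extend_policy f \<kappa>f N x \<theta> \<mu>)"
    using feasible_policy_extend_policy[OF _ Xf_UPI horizon _ \<theta>'] \<kappa>N_x\<theta> by simp
  moreover have "\<theta>' \<in> modes nu" using \<theta>' unfolding cover_def by blast
  ultimately show "(f x (\<kappa>N x \<theta>) \<theta>, \<theta>') \<in> feas_domain nu P f Y Xf N"
    unfolding feas_domain_def by blast
qed

end
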